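(* Let $p$ be a binary word of length $l$ whose maximum run size is $i$. Then $p$ does not have an internal zero at $l+1$ if and only if for every $j\in\{1,\dots,i\}$, $p$ has a run of size $j$.
   Context: $c_p(w)$ is the number of occurrences of $p$ as a (not necessarily consecutive) subsequence of $w$; $B_{n,p}(k)$ is the number of binary words of length $n$ with $c_p(w)=k$. A run is a maximal block of consecutive equal letters; its size is its length. $p$ has an internal zero at $n$ if there exist $0\le k_1<k_2<k_3$ with $B_{n,p}(k_1)\ne0$, $B_{n,p}(k_2)=0$, $B_{n,p}(k_3)\ne0$. *)

theory Defs
  imports Main
begin

definition occ :: "bool list \<Rightarrow> bool list \<Rightarrow> nat" where
  "occ p w = card {I. I \<subseteq> {0..<length w} \<and> card I = length p \<and> nths w I = p}"

definition B :: "nat \<Rightarrow> bool list \<Rightarrow> nat \<Rightarrow> nat" where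
  "B n p k = card {w :: bool list. length w = n \<and> occ p w = k}"

definition internal_zero :: "bool list \<Rightarrow> nat \<Rightarrow> bool" where
  "internal_zero p n \<longleftrightarrow>
     (\<exists>k1 k2 k3. k1 < k2 \<and> k2 < k3 \<and> B n p k1 \<noteq> 0 \<and> B n p k2 = 0 \<and> B n p k3 \<noteq> 0)"

text \<open>p has a run (maximal block of equal consecutive letters) of size j,
  occupying positions a, ..., a+j-1.\<close>
definition has_run :: "bool list \<Rightarrow> nat \<Rightarrow> bool" where
  "has_run p j \<longleftrightarrow> (\<exists>a. 1 \<le> j \<and> a + j \<le> length p \<and>
       (\<forall>k\<in>{a..<a+j}. p ! k = p ! a) \<and>
       (a = 0 \<or> p ! (a - 1) \<noteq> p ! a) \<and>
       (a + j = length p \<or> p ! (a + j) \<noteq> p ! a))"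

end

theory Submission
  imports Defs
begin

text \<open>A word w of length |p| + 1 contains p only as p with one letter inserted, and
  its occurrences of p correspond to the positions whose deletion yields p. These
  positions form a maximal block of equal letters of w. Putting the letter opposite to
  the first letter of p in front gives a block of size 1, and a block of size j + 1 \<ge> 2
  arises exactly by doubling a letter inside a run of p of size j. So the positive
  values of B_{l+1,p} are 1 and the numbers j + 1 for run sizes j of p, and these have
  no gap exactly when every size up to the maximal run size occurs.\<close>

definition delete_at :: "nat \<Rightarrow> 'a list \<Rightarrow> 'a list" where
  "delete_at d w = take d w @ drop (Suc d) w"

lemma length_delete_at [simp]: "d < length w \<Longrightarrow> length (delete_at d w) = length w - 1"
  by (simp add: delete_at_def)

lemma nth_delete_at:
  "d < length w \<Longrightarrow> t < length w - 1 \<Longrightarrow> delete_at d w ! t = (if t < d then w ! t else w ! Suc t)"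
  by (auto simp: delete_at_def nth_append min_def)

lemma nths_remove_index:
  assumes "d < length w"
  shows "nths w ({0..<length w} - {d}) = delete_at d w"
proof -
  let ?A = "{0..<length w} - {d}"
  have "nths w ?A = nths (take d w @ w ! d # drop (Suc d) w) ?A"
    using assms by (simp add: Cons_nth_drop_Suc)
  also have "\<dots> = take d w @ nths (drop (Suc d) w) {j. Suc j + d \<in> ?A}"
    using assms by (simp add: nths_append nths_Cons nths_all min_def)
  also have "nths (drop (Suc d) w) {j. Suc j + d \<in> ?A} = drop (Suc d) w"
    by (rule nths_all) auto
  finally show ?thesis by (simp add: delete_at_def)
qed

definition deletion_positions :: "'a list \<Rightarrow> 'a list \<Rightarrow> nat set" where
  "deletion_positions w p = {d. d < length w \<and> delete_at d w = p}"

text \<open>An occurrence of p in a word one letter longer omits exactly one position.\<close>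
lemma occ_eq_card_deletion_positions:
  assumes len: "length w = Suc (length p)"
  shows "occ p w = card (deletion_positions w p)"
proof -
  let ?compl = "\<lambda>d. {0..<length w} - {d}"
  have "{I. I \<subseteq> {0..<length w} \<and> card I = length p \<and> nths w I = p}
      = ?compl ` deletion_positions w p"
  proof (intro equalityI subsetI)
    fix I assume "I \<in> {I. I \<subseteq> {0..<length w} \<and> card I = length p \<and> nths w I = p}"
    then have I: "I \<subseteq> {0..<length w}" "card I = length p" "nths w I = p" by auto
    have "I \<noteq> {0..<length w}"
      using I(2) len by auto
    then obtain d where d: "d < length w" "d \<notin> I"
      using I(1) by (metis atLeastLessThan_iff subsetI subset_antisym zero_le)
    have "I = ?compl d"
      using I d len by (intro card_subset_eq) (auto simp: card_Diff_singleton)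
    then show "I \<in> ?compl ` deletion_positions w p"
      using d I(3) nths_remove_index[of d w] by (auto simp: deletion_positions_def)
  next
    fix I assume "I \<in> ?compl ` deletion_positions w p"
    then obtain d where "d < length w" "delete_at d w = p" "I = ?compl d"
      by (auto simp: deletion_positions_def)
    then show "I \<in> {I. I \<subseteq> {0..<length w} \<and> card I = length p \<and> nths w I = p}"
      using len nths_remove_index[of d w] by (auto simp: card_Diff_singleton)
  qed
  moreover have "inj_on ?compl (deletion_positions w p)"
  proof (rule inj_onI)
    fix d e assume "d \<in> deletion_positions w p" and eq: "?compl d = ?compl e"
    then have "d < length w"
      by (simp add: deletion_positions_def)
    moreover have "d \<notin> ?compl e"
      unfolding eq[symmetric] by simp
    ultimately show "d = e" by simp
  qed
  ultimately show ?thesis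
    unfolding occ_def by (simp add: card_image)
qed

lemma delete_at_eq_iff:
  assumes "d \<le> e" "e < length w"
  shows "delete_at d w = delete_at e w \<longleftrightarrow> (\<forall>k\<in>{d..e}. w ! k = w ! d)"
proof
  assume eq: "delete_at d w = delete_at e w"
  have step: "w ! Suc k = w ! k" if "d \<le> k" "k < e" for k
  proof -
    have "w ! Suc k = delete_at d w ! k"
      using that assms by (simp add: nth_delete_at)
    also have "\<dots> = w ! k"
      using that assms by (simp add: eq nth_delete_at)
    finally show ?thesis .
  qed
  show "\<forall>k\<in>{d..e}. w ! k = w ! d"
  proof
    fix k assume "k \<in> {d..e}"
    then have "d \<le> k" "k \<le> e" by auto
    then show "w ! k = w ! d"
      by (induction k rule: dec_induct) (simp_all add: step)
  qed
next
  assume const: "\<forall>k\<in>{d..e}. w ! k = w ! d"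
  show "delete_at d w = delete_at e w"
  proof (rule nth_equalityI)
    fix t assume t: "t < length (delete_at d w)"
    show "delete_at d w ! t = delete_at e w ! t"
    proof (cases "d \<le> t \<and> t < e")
      case True
      then have "w ! Suc t = w ! t"
        using const[rule_format, of t] const[rule_format, of "Suc t"] by simp
      then show ?thesis
        using True t assms by (simp add: nth_delete_at)
    qed (use t assms in \<open>auto simp: nth_delete_at\<close>)
  qed (use assms in simp)
qed

lemma delete_at_Suc_eq:
  assumes "Suc k < length w" "w ! Suc k = w ! k"
  shows "delete_at k w = delete_at (Suc k) w"
proof -
  have "\<forall>t\<in>{k..Suc k}. w ! t = w ! k"
    using assms(2) le_Suc_eq by auto
  then show ?thesis
    using assms(1) le_SucI[OF order_refl, of k] delete_at_eq_iff[of k "Suc k" w] by blast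
qed

lemma deletion_positions_maximal_block:
  assumes "a \<le> d" "d \<le> b" "b < length w"
    and const: "\<forall>k\<in>{a..b}. w ! k = w ! a"
    and left: "a = 0 \<or> w ! (a - 1) \<noteq> w ! a"
    and right: "Suc b = length w \<or> w ! Suc b \<noteq> w ! a"
  shows "deletion_positions w (delete_at d w) = {a..b}"
proof (intro equalityI subsetI)
  fix e assume "e \<in> deletion_positions w (delete_at d w)"
  then have e: "e < length w" "delete_at e w = delete_at d w"
    by (auto simp: deletion_positions_def)
  show "e \<in> {a..b}"
  proof (rule ccontr)
    assume "e \<notin> {a..b}"
    then consider "e < a" | "b < e" by fastforce
    then show False
    proof cases
      case 1
      then have "e \<le> d" "d < length w"
        using assms(1-3) by auto
      then have "\<forall>k\<in>{e..d}. w ! k = w ! e"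
        using e(2) delete_at_eq_iff by blast
      moreover have "a - 1 \<in> {e..d}" "a \<in> {e..d}"
        using 1 assms(1) by auto
      ultimately have "w ! (a - 1) = w ! a"
        by metis
      then show False using left 1 by simp
    next
      case 2
      then have "d \<le> e"
        using assms(2) by simp
      then have "\<forall>k\<in>{d..e}. w ! k = w ! d"
        using e delete_at_eq_iff by metis
      moreover have "Suc b \<in> {d..e}" "d \<in> {a..b}"
        using 2 assms(1,2) by auto
      ultimately have "w ! Suc b = w ! a"
        using const by metis
      then show False using right 2 e by simp
    qed
  qed
next
  have same: "delete_at a w = delete_at t w" if "t \<in> {a..b}" for t
  proof -
    have "{a..t} \<subseteq> {a..b}" "a \<le> t" "t < length w"
      using that assms(3) by auto
    then show ?thesis
      using const delete_at_eq_iff[of a t w] by blast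
  qed
  fix e assume "e \<in> {a..b}"
  then show "e \<in> deletion_positions w (delete_at d w)"
    using same[of e] same[of d] assms(1-3) by (simp add: deletion_positions_def)
qed

lemma occ_maximal_block:
  assumes "length w = Suc (length p)" "delete_at d w = p"
    and "a \<le> d" "d \<le> b" "b < length w"
    and "\<forall>k\<in>{a..b}. w ! k = w ! a"
    and "a = 0 \<or> w ! (a - 1) \<noteq> w ! a"
    and "Suc b = length w \<or> w ! Suc b \<noteq> w ! a"
  shows "occ p w = Suc (b - a)"
proof -
  have "deletion_positions w p = {a..b}"
    using deletion_positions_maximal_block[OF assms(3-8)] assms(2) by simp
  then show ?thesis
    using assms(1,3,4) by (simp add: occ_eq_card_deletion_positions)
qed

lemma occ_Cons_not_hd:
  assumes "p \<noteq> []"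
  shows "occ p ((\<not> hd p) # p) = 1"
  using assms occ_maximal_block[of "(\<not> hd p) # p" p 0 0 0]
  by (simp add: delete_at_def hd_conv_nth)

lemma occ_duplicate_run_letter:
  assumes "has_run p j"
  shows "\<exists>w. length w = Suc (length p) \<and> occ p w = Suc j"
proof -
  obtain a where run: "1 \<le> j" "a + j \<le> length p" "\<forall>k\<in>{a..<a+j}. p ! k = p ! a"
    and left: "a = 0 \<or> p ! (a - 1) \<noteq> p ! a"
    and right: "a + j = length p \<or> p ! (a + j) \<noteq> p ! a"
    using assms unfolding has_run_def by blast
  define w where "w = take (Suc a) p @ drop a p"
  have len: "length w = Suc (length p)"
    using run(1,2) by (simp add: w_def)
  have nth_w: "w ! t = (if t \<le> a then p ! t else p ! (t - 1))" if "t < Suc (length p)" for t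
  proof -
    have "length (take (Suc a) p) = Suc a"
      using run(1,2) by simp
    moreover have "drop a p ! (t - Suc a) = p ! (t - 1)" if "a < t"
      using that \<open>t < Suc (length p)\<close> run(1,2) by simp
    ultimately show ?thesis
      by (auto simp: w_def nth_append)
  qed
  have del: "delete_at a w = p"
    using run(1,2) by (simp add: delete_at_def w_def)
  have const: "\<forall>k\<in>{a..a+j}. w ! k = w ! a"
  proof
    fix k assume k: "k \<in> {a..a+j}"
    show "w ! k = w ! a"
    proof (cases "k = a")
      case False
      then have "k - 1 \<in> {a..<a+j}"
        using k by auto
      then have "p ! (k - 1) = p ! a"
        using run(3) by blast
      then show ?thesis
        using k False run(1,2) nth_w[of k] nth_w[of a] by simp
    qed simp
  qed
  have w_left: "a = 0 \<or> w ! (a - 1) \<noteq> w ! a"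
    using left run(1,2) nth_w[of "a - 1"] nth_w[of a] by auto
  have w_right: "Suc (a + j) = length w \<or> w ! Suc (a + j) \<noteq> w ! a"
    using right run(1,2) nth_w[of "Suc (a + j)"] nth_w[of a] len by auto
  have "a + j < length w"
    using run(2) len by simp
  then have "occ p w = Suc j"
    using occ_maximal_block[OF len del order_refl le_add1 _ const w_left w_right] by simp
  with len show ?thesis by blast
qed

lemma has_run_delete_at_maximal_block:
  assumes "a < b" "b < length w"
    and const: "\<forall>k\<in>{a..b}. w ! k = w ! a"
    and left: "a = 0 \<or> w ! (a - 1) \<noteq> w ! a"
    and right: "Suc b = length w \<or> w ! Suc b \<noteq> w ! a"
  shows "has_run (delete_at a w) (b - a)"
proof -
  let ?p = "delete_at a w"
  have nth_p: "?p ! t = (if t < a then w ! t else w ! Suc t)" if "t < length w - 1" for t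
    using that assms(1,2) by (simp add: nth_delete_at)
  have w_block: "w ! k = w ! a" if "a \<le> k" "k \<le> b" for k
    using const that atLeastAtMost_iff by blast
  have p_a: "?p ! a = w ! a"
    using assms(1,2) nth_p[of a] w_block[of "Suc a"] by simp
  show ?thesis
    unfolding has_run_def
  proof (intro exI[of _ a] conjI ballI)
    show "1 \<le> b - a" "a + (b - a) \<le> length ?p"
      using assms(1,2) by auto
    show "?p ! k = ?p ! a" if "k \<in> {a..<a + (b - a)}" for k
    proof -
      have "k < length w - 1" "a \<le> k" "k < b"
        using that assms(1,2) by auto
      then show ?thesis
        using nth_p[of k] w_block[of "Suc k"] p_a by simp
    qed
    show "a = 0 \<or> ?p ! (a - 1) \<noteq> ?p ! a"
      using left assms(1,2) nth_p[of "a - 1"] p_a by auto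
    show "a + (b - a) = length ?p \<or> ?p ! (a + (b - a)) \<noteq> ?p ! a"
    proof (cases "Suc b = length w")
      case False
      then have "b < length w - 1"
        using assms(2) by simp
      then show ?thesis
        using right assms(1) nth_p[of b] p_a by auto
    qed (use assms(1,2) in force)
  qed
qed

lemma has_run_occ_minus_one:
  assumes len: "length w = Suc (length p)" and two: "2 \<le> occ p w"
  shows "has_run p (occ p w - 1)"
proof -
  let ?D = "deletion_positions w p"
  define a where "a = Min ?D"
  define b where "b = Max ?D"
  have "finite ?D"
    by (rule finite_subset[of _ "{..<length w}"]) (auto simp: deletion_positions_def)
  moreover have "?D \<noteq> {}"
    using two len by (auto simp: occ_eq_card_deletion_positions)
  ultimately have a: "a \<in> ?D" "\<And>e. e \<in> ?D \<Longrightarrow> a \<le> e"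
    and b: "b \<in> ?D" "\<And>e. e \<in> ?D \<Longrightarrow> e \<le> b"
    unfolding a_def b_def by auto
  have ab: "a \<le> b" "b < length w" "delete_at a w = p" "delete_at b w = p"
    using a b by (auto simp: deletion_positions_def)
  have "delete_at a w = delete_at b w"
    using ab(3,4) by simp
  then have const: "\<forall>k\<in>{a..b}. w ! k = w ! a"
    using delete_at_eq_iff[OF ab(1,2)] by blast
  have left: "a = 0 \<or> w ! (a - 1) \<noteq> w ! a"
  proof (rule ccontr)
    assume "\<not> (a = 0 \<or> w ! (a - 1) \<noteq> w ! a)"
    then have a_pos: "Suc (a - 1) = a" and "w ! Suc (a - 1) = w ! (a - 1)"
      by auto
    then have "delete_at (a - 1) w = p"
      using ab delete_at_Suc_eq[of "a - 1" w] by simp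
    then have "a - 1 \<in> ?D"
      using ab(1,2) by (simp add: deletion_positions_def)
    then show False
      using a(2) a_pos by fastforce
  qed
  have right: "Suc b = length w \<or> w ! Suc b \<noteq> w ! a"
  proof (rule ccontr)
    assume "\<not> (Suc b = length w \<or> w ! Suc b \<noteq> w ! a)"
    moreover have "w ! b = w ! a"
      using const ab(1) atLeastAtMost_iff order_refl by blast
    ultimately have "Suc b < length w" "w ! Suc b = w ! b"
      using ab(2) by auto
    then have "delete_at (Suc b) w = p"
      using ab(4) delete_at_Suc_eq[of b w] by simp
    then have "Suc b \<in> ?D"
      using \<open>Suc b < length w\<close> by (simp add: deletion_positions_def)
    then show False
      using b(2) by fastforce
  qed
  have occ: "occ p w = Suc (b - a)"
    using occ_maximal_block[OF len ab(3) order_refl ab(1,2) const left right] .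
  then have "a < b"
    using two by simp
  then show ?thesis
    using has_run_delete_at_maximal_block[OF _ ab(2) const left right] ab(3) occ by simp
qed

lemma B_ne_0_iff: "B n p k \<noteq> 0 \<longleftrightarrow> (\<exists>w. length w = n \<and> occ p w = k)"
proof -
  have "finite {w :: bool list. length w = n}"
    using finite_lists_length_eq[of "UNIV :: bool set" n] by simp
  then have "finite {w :: bool list. length w = n \<and> occ p w = k}"
    by (rule finite_subset[rotated]) auto
  then show ?thesis
    unfolding B_def by auto
qed

lemma B_Suc_length_ne_0_iff:
  assumes "p \<noteq> []"
  shows "B (Suc (length p)) p (Suc j) \<noteq> 0 \<longleftrightarrow> j = 0 \<or> has_run p j"
proof
  assume "B (Suc (length p)) p (Suc j) \<noteq> 0"
  then obtain w where "length w = Suc (length p)" "occ p w = Suc j"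
    using B_ne_0_iff by blast
  then show "j = 0 \<or> has_run p j"
    using has_run_occ_minus_one[of w p] by fastforce
next
  assume "j = 0 \<or> has_run p j"
  then have "\<exists>w. length w = Suc (length p) \<and> occ p w = Suc j"
  proof
    assume "j = 0"
    then show ?thesis
      using occ_Cons_not_hd[OF assms] by (intro exI[of _ "(\<not> hd p) # p"]) simp
  qed (rule occ_duplicate_run_letter)
  then show "B (Suc (length p)) p (Suc j) \<noteq> 0"
    using B_ne_0_iff by blast
qed

lemma internal_zero_Suc_length_iff:
  assumes "has_run p i" and max: "\<forall>j. has_run p j \<longrightarrow> j \<le> i"
  shows "internal_zero p (Suc (length p)) \<longleftrightarrow> (\<exists>j\<in>{1..i}. \<not> has_run p j)"
proof -
  have "p \<noteq> []"
    using assms(1) by (auto simp: has_run_def)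
  note attained = B_Suc_length_ne_0_iff[OF this]
  show ?thesis
  proof
    assume "internal_zero p (Suc (length p))"
    then obtain k1 k2 k3 where k: "k1 < k2" "k2 < k3"
      "B (Suc (length p)) p k2 = 0" "B (Suc (length p)) p k3 \<noteq> 0"
      unfolding internal_zero_def by blast
    obtain j j' where j: "k2 = Suc j" "k3 = Suc j'"
      using k(1,2) gr0_implies_Suc[of k2] gr0_implies_Suc[of k3] by auto
    then have "j \<noteq> 0" "\<not> has_run p j"
      using k(3) attained[of j] by auto
    moreover have "has_run p j'"
      using j k(2,4) attained[of j'] \<open>j \<noteq> 0\<close> by auto
    ultimately show "\<exists>j\<in>{1..i}. \<not> has_run p j"
      using j k(2) max by (intro bexI[of _ j]) auto
  next
    assume "\<exists>j\<in>{1..i}. \<not> has_run p j"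
    then obtain j where j: "j \<in> {1..i}" "\<not> has_run p j"
      by blast
    then have "j < i"
      using assms(1) by (metis atLeastAtMost_iff le_neq_implies_less)
    moreover have "B (Suc (length p)) p 1 \<noteq> 0" "B (Suc (length p)) p (Suc i) \<noteq> 0"
      "B (Suc (length p)) p (Suc j) = 0"
      using j attained[of 0] attained[of i] attained[of j] assms(1) by auto
    ultimately show "internal_zero p (Suc (length p))"
      unfolding internal_zero_def
      by (intro exI[of _ 1] exI[of _ "Suc j"] exI[of _ "Suc i"]) (use j in auto)
  qed
qed

theorem mainTheorem12:
  fixes p :: "bool list" and l i :: nat
  assumes "length p = l"
    and "has_run p i" and "\<forall>j. has_run p j \<longrightarrow> j \<le> i"
  shows "\<not> internal_zero p (l + 1) \<longleftrightarrow> (\<forall>j\<in>{1..i}. has_run p j)"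
  using internal_zero_Suc_length_iff[OF assms(2,3)] assms(1) by auto

end
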